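(* For each $\sigma\in\{132,213,312,3142\}$ and every $n\ge 0$, we have $F_n(321,\sigma)=S_n(231,321,\sigma)$.
   Context: A permutation of length $n$ is a rearrangement of $[n]$; $S_n$ is the set of all of them. A permutation $\pi$ avoids a classical pattern $p\in S_k$ if no subsequence of $\pi$ of length $k$ is order-isomorphic to $p$. A Fishburn permutation is a permutation $\pi=\pi_1\cdots\pi_n$ for which there are no indices $i<j$ with $\pi_j<\pi_i<\pi_{i+1}$ and $\pi_i=\pi_j+1$. $F_n(\sigma_1,\dots,\sigma_k)$ denotes the set of Fishburn permutations of length $n$ avoiding each of the classical patterns $\sigma_1,\dots,\sigma_k$, and $S_n(\sigma_1,\dots,\sigma_k)$ the set of all permutations of length $n$ avoiding each $\sigma_i$. *)

theory Defs
  imports Main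
begin

definition perms :: "nat \<Rightarrow> nat list set" where
  "perms n = {\<pi>. distinct \<pi> \<and> set \<pi> = {1..n}}"

definition contains :: "nat list \<Rightarrow> nat list \<Rightarrow> bool" where
  "contains \<pi> p \<longleftrightarrow> (\<exists>is. length is = length p \<and> sorted_wrt (<) is \<and>
      (\<forall>i\<in>set is. i < length \<pi>) \<and>
      (\<forall>a<length p. \<forall>b<length p. (\<pi> ! (is ! a) < \<pi> ! (is ! b)) \<longleftrightarrow> (p ! a < p ! b)))"

definition avoids :: "nat list \<Rightarrow> nat list \<Rightarrow> bool" where
  "avoids \<pi> p \<longleftrightarrow> \<not> contains \<pi> p"

definition fishburn :: "nat list \<Rightarrow> bool" where
  "fishburn \<pi> \<longleftrightarrow> \<not> (\<exists>i j. i < j \<and> j < length \<pi> \<and> Suc i < length \<pi> \<and>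
      \<pi> ! j < \<pi> ! i \<and> \<pi> ! i < \<pi> ! Suc i \<and> \<pi> ! i = \<pi> ! j + 1)"

definition S_av :: "nat \<Rightarrow> nat list list \<Rightarrow> nat list set" where
  "S_av n ps = {\<pi> \<in> perms n. \<forall>p\<in>set ps. avoids \<pi> p}"

definition F_av :: "nat \<Rightarrow> nat list list \<Rightarrow> nat list set" where
  "F_av n ps = {\<pi> \<in> perms n. fishburn \<pi> \<and> (\<forall>p\<in>set ps. avoids \<pi> p)}"

end

theory Submission
  imports Defs
begin

text \<open>A violation \<open>\<pi>\<^sub>j < \<pi>\<^sub>i < \<pi>\<^sub>i\<^sub>+\<^sub>1\<close> (\<open>i < j\<close>) of the Fishburn condition is itself
  an occurrence of 231, so 231-avoiders are Fishburn. Conversely, in a Fishburn 321-avoider every 231-occurrence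
  can be tightened (by induction on \<open>\<pi>\<^sub>i - \<pi>\<^sub>k\<close>, moving to the position of \<open>\<pi>\<^sub>k + 1\<close>) until
  \<open>\<pi>\<^sub>i = \<pi>\<^sub>k + 1\<close>; Fishburn then forces \<open>\<pi>\<^sub>i\<^sub>+\<^sub>1 < \<pi>\<^sub>k\<close>, giving an occurrence of 3142.
  Each of 132, 213, 312, 3142 is a pattern of 3142, so none of them can be avoided.\<close>

lemma all_less_3_nat: "(\<forall>a<(3::nat). P a) \<longleftrightarrow> P 0 \<and> P 1 \<and> P 2"
  unfolding numeral_3_eq_3 numeral_2_eq_2 by (auto simp: less_Suc_eq)

lemma all_less_4_nat: "(\<forall>a<(4::nat). P a) \<longleftrightarrow> P 0 \<and> P 1 \<and> P 2 \<and> P 3"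
proof -
  have "(4::nat) = Suc (Suc (Suc (Suc 0)))" "(3::nat) = Suc (Suc (Suc 0))" "(2::nat) = Suc (Suc 0)"
    by simp_all
  then show ?thesis by (simp only:) (auto simp: less_Suc_eq)
qed

lemma contains_trans:
  assumes "contains \<pi> q" and "contains q p"
  shows "contains \<pi> p"
proof -
  obtain idx where idx: "length idx = length q" "sorted_wrt (<) idx" "\<forall>i\<in>set idx. i < length \<pi>"
    "\<forall>a<length q. \<forall>b<length q. \<pi> ! (idx ! a) < \<pi> ! (idx ! b) \<longleftrightarrow> q ! a < q ! b"
    using assms(1) unfolding contains_def by blast
  obtain js where js: "length js = length p" "sorted_wrt (<) js" "\<forall>j\<in>set js. j < length q"
    "\<forall>a<length p. \<forall>b<length p. q ! (js ! a) < q ! (js ! b) \<longleftrightarrow> p ! a < p ! b"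
    using assms(2) unfolding contains_def by blast
  have js_bound: "js ! a < length q" if "a < length p" for a
    using js(1,3) that nth_mem by metis
  let ?ks = "map ((!) idx) js"
  have "sorted_wrt (<) ?ks"
    using js(1,2) idx(1,2) js_bound by (auto simp: sorted_wrt_iff_nth_less)
  moreover have "\<forall>k\<in>set ?ks. k < length \<pi>"
    using idx(1,3) js(3) by auto
  moreover have "\<forall>a<length p. \<forall>b<length p. \<pi> ! (?ks ! a) < \<pi> ! (?ks ! b) \<longleftrightarrow> p ! a < p ! b"
    using idx(4) js(1,4) js_bound by simp
  ultimately show ?thesis
    unfolding contains_def using js(1) by (intro exI[of _ ?ks]) simp
qed

lemma contains_3I:
  assumes "i < j" "j < k" "k < length \<pi>" "length p = 3"
    and "\<forall>a<3. \<forall>b<3. \<pi> ! ([i,j,k] ! a) < \<pi> ! ([i,j,k] ! b) \<longleftrightarrow> p ! a < p ! b"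
  shows "contains \<pi> p"
  unfolding contains_def using assms by (intro exI[of _ "[i,j,k]"]) auto

lemma contains_4I:
  assumes "i < j" "j < k" "k < l" "l < length \<pi>" "length p = 4"
    and "\<forall>a<4. \<forall>b<4. \<pi> ! ([i,j,k,l] ! a) < \<pi> ! ([i,j,k,l] ! b) \<longleftrightarrow> p ! a < p ! b"
  shows "contains \<pi> p"
  unfolding contains_def using assms by (intro exI[of _ "[i,j,k,l]"]) auto

lemma contains_231_iff:
  "contains \<pi> [2,3,1] \<longleftrightarrow>
    (\<exists>i j k. i < j \<and> j < k \<and> k < length \<pi> \<and> \<pi> ! k < \<pi> ! i \<and> \<pi> ! i < \<pi> ! j)"
proof
  assume "contains \<pi> [2,3,1]"
  then obtain idx where idx: "length idx = length [2,3,1::nat]" "sorted_wrt (<) idx"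
    "\<forall>i\<in>set idx. i < length \<pi>"
    "\<forall>a<length [2,3,1::nat]. \<forall>b<length [2,3,1::nat].
       \<pi> ! (idx ! a) < \<pi> ! (idx ! b) \<longleftrightarrow> [2,3,1::nat] ! a < [2,3,1::nat] ! b"
    unfolding contains_def by blast
  have "length [2,3,1::nat] = 3" by simp
  note idx = idx[unfolded this]
  have "idx ! 0 < idx ! 1" "idx ! 1 < idx ! 2"
    using idx(1,2) by (auto simp: sorted_wrt_iff_nth_less)
  moreover have "idx ! 2 < length \<pi>"
    using idx(1,3) nth_mem[of 2 idx] by auto
  moreover have "\<pi> ! (idx ! 2) < \<pi> ! (idx ! 0)" "\<pi> ! (idx ! 0) < \<pi> ! (idx ! 1)"
    using idx(4)[rule_format, of 2 0] idx(4)[rule_format, of 0 1] by simp_all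
  ultimately show "\<exists>i j k. i < j \<and> j < k \<and> k < length \<pi> \<and> \<pi> ! k < \<pi> ! i \<and> \<pi> ! i < \<pi> ! j"
    by blast
next
  assume "\<exists>i j k. i < j \<and> j < k \<and> k < length \<pi> \<and> \<pi> ! k < \<pi> ! i \<and> \<pi> ! i < \<pi> ! j"
  then obtain i j k where "i < j" "j < k" "k < length \<pi>" "\<pi> ! k < \<pi> ! i" "\<pi> ! i < \<pi> ! j"
    by blast
  then show "contains \<pi> [2,3,1]"
    by (intro contains_3I[of i j k]) (auto simp: all_less_3_nat)
qed

lemma fishburn_if_avoids_231:
  assumes "avoids \<pi> [2,3,1]"
  shows "fishburn \<pi>"
  unfolding fishburn_def
proof
  assume "\<exists>i j. i < j \<and> j < length \<pi> \<and> Suc i < length \<pi> \<and>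
      \<pi> ! j < \<pi> ! i \<and> \<pi> ! i < \<pi> ! Suc i \<and> \<pi> ! i = \<pi> ! j + 1"
  then obtain i j where "i < j" "j < length \<pi>" "\<pi> ! j < \<pi> ! i" "\<pi> ! i < \<pi> ! Suc i"
    by blast
  moreover from this have "Suc i < j" by (cases "j = Suc i") auto
  ultimately have "contains \<pi> [2,3,1]"
    unfolding contains_231_iff by blast
  with assms show False unfolding avoids_def by blast
qed

lemma tight_231_occurrence:
  assumes perm: "\<pi> \<in> perms n" and fish: "fishburn \<pi>" and av321: "avoids \<pi> [3,2,1]"
    and "i < j" "j < k" "k < length \<pi>" "\<pi> ! k < \<pi> ! i" "\<pi> ! i < \<pi> ! j"
  shows "\<exists>i j k. Suc i < j \<and> j < k \<and> k < length \<pi> \<and>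
           \<pi> ! Suc i < \<pi> ! k \<and> \<pi> ! k < \<pi> ! i \<and> \<pi> ! i < \<pi> ! j"
  using assms(4-)
proof (induction "\<pi> ! i - \<pi> ! k" arbitrary: i j k rule: less_induct)
  case (less i k j) \<comment> \<open>the variables of the measure come first\<close>
  have inj: "\<pi> ! x = \<pi> ! y \<longleftrightarrow> x = y" if "x < length \<pi>" "y < length \<pi>" for x y
    using perm that unfolding perms_def by (simp add: nth_eq_iff_index_eq)
  show ?case
  proof (cases "\<pi> ! i = Suc (\<pi> ! k)")
    case True
    have "\<not> (i < k \<and> k < length \<pi> \<and> Suc i < length \<pi> \<and> \<pi> ! k < \<pi> ! i \<and>
        \<pi> ! i < \<pi> ! Suc i \<and> \<pi> ! i = \<pi> ! k + 1)"
      using fish unfolding fishburn_def by blast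
    then have "\<not> \<pi> ! i < \<pi> ! Suc i"
      using less.prems True by auto
    then have "Suc i < j"
      using less.prems by (cases "j = Suc i") auto
    moreover have "\<pi> ! Suc i \<noteq> \<pi> ! i" "\<pi> ! Suc i \<noteq> \<pi> ! k"
      using inj less.prems \<open>Suc i < j\<close> by auto
    ultimately show ?thesis
      using less.prems True \<open>\<not> \<pi> ! i < \<pi> ! Suc i\<close> by (intro exI[of _ i] exI[of _ j] exI[of _ k]) auto
  next
    case False
    have "\<pi> ! i \<in> set \<pi>" "\<pi> ! k \<in> set \<pi>"
      using less.prems by simp_all
    then have "Suc (\<pi> ! k) \<in> set \<pi>"
      using perm less.prems(4) unfolding perms_def by auto
    then obtain e where e: "e < length \<pi>" "\<pi> ! e = Suc (\<pi> ! k)"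
      by (metis in_set_conv_nth)
    text \<open>The entry \<open>\<pi>\<^sub>k + 1\<close> lies strictly between \<open>\<pi>\<^sub>k\<close> and \<open>\<pi>\<^sub>i\<close> in value, so its
      position yields either a 321-occurrence or a 231-occurrence of smaller height.\<close>
    have "e \<noteq> i" "e \<noteq> k"
      using e False by auto
    then consider "e < i" | "i < e" "e < k" | "k < e"
      by linarith
    then show ?thesis
    proof cases
      case 1
      then show ?thesis
        using less.hyps[of e k j] less.prems e False by auto
    next
      case 2
      then have "contains \<pi> [3,2,1]"
        using less.prems e False by (intro contains_3I[of i e k]) (auto simp: all_less_3_nat)
      with av321 show ?thesis unfolding avoids_def by blast
    next
      case 3
      then show ?thesis
        using less.hyps[of i e j] less.prems e False by auto
    qed
  qed
qed

lemma contains_3142_if_contains_231: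
  assumes "\<pi> \<in> perms n" "fishburn \<pi>" "avoids \<pi> [3,2,1]" "contains \<pi> [2,3,1]"
  shows "contains \<pi> [3,1,4,2]"
proof -
  obtain i j k where "Suc i < j" "j < k" "k < length \<pi>"
      "\<pi> ! Suc i < \<pi> ! k" "\<pi> ! k < \<pi> ! i" "\<pi> ! i < \<pi> ! j"
    using tight_231_occurrence[OF assms(1-3)] assms(4) unfolding contains_231_iff by metis
  then show ?thesis
    by (intro contains_4I[of i "Suc i" j k]) (auto simp: all_less_4_nat)
qed

lemma patterns_of_3142:
  assumes "\<sigma> \<in> {[1,3,2], [2,1,3], [3,1,2], [3,1,4,2]}"
  shows "contains [3,1,4,2] \<sigma>"
  using assms
proof (elim insertE emptyE)
  assume "\<sigma> = [1,3,2]"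
  then show ?thesis by (intro contains_3I[of 1 2 3]) (auto simp: all_less_3_nat)
next
  assume "\<sigma> = [2,1,3]"
  then show ?thesis by (intro contains_3I[of 0 1 2]) (auto simp: all_less_3_nat)
next
  assume "\<sigma> = [3,1,2]"
  then show ?thesis by (intro contains_3I[of 0 1 3]) (auto simp: all_less_3_nat)
next
  assume "\<sigma> = [3,1,4,2]"
  then show ?thesis by (intro contains_4I[of 0 1 2 3]) (auto simp: all_less_4_nat)
qed

theorem mainTheorem2:
  fixes \<sigma> :: "nat list" and n :: nat
  assumes "\<sigma> \<in> {[1,3,2], [2,1,3], [3,1,2], [3,1,4,2]}"
  shows "F_av n [[3,2,1], \<sigma>] = S_av n [[2,3,1], [3,2,1], \<sigma>]"
proof
  show "S_av n [[2,3,1], [3,2,1], \<sigma>] \<subseteq> F_av n [[3,2,1], \<sigma>]"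
    unfolding S_av_def F_av_def using fishburn_if_avoids_231 by auto
next
  show "F_av n [[3,2,1], \<sigma>] \<subseteq> S_av n [[2,3,1], [3,2,1], \<sigma>]"
  proof
    fix \<pi> assume "\<pi> \<in> F_av n [[3,2,1], \<sigma>]"
    then have \<pi>: "\<pi> \<in> perms n" "fishburn \<pi>" "avoids \<pi> [3,2,1]" "avoids \<pi> \<sigma>"
      unfolding F_av_def by auto
    have "avoids \<pi> [2,3,1]"
      using contains_3142_if_contains_231[OF \<pi>(1-3)] contains_trans patterns_of_3142[OF assms] \<pi>(4)
      unfolding avoids_def by blast
    with \<pi> show "\<pi> \<in> S_av n [[2,3,1], [3,2,1], \<sigma>]"
      unfolding S_av_def by auto
  qed
qed

end
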